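(* Let $A_1,\dots,A_n:\mathbb{R}^d\rightrightarrows\mathbb{R}^d$ be maximal monotone and $B:\mathbb{R}^d\to\mathbb{R}^d$ monotone and Lipschitz continuous. Let $(z^k)\subset\mathbb{R}^d$, $(w_1^k,\dots,w_{n+1}^k)\subset\mathbb{R}^{(n+1)d}$ and $(x_i^k,y_i^k)_{i=1}^{n+1}\subset\mathbb{R}^{2(n+1)d}$ be deterministic sequences such that $y_i^k\in A_i(x_i^k)$ for $i=1,\dots,n$, $\sum_{i=1}^{n+1}w_i^k=0$ for all $k$, $$\xi_1\sum_{i=1}^n\|y_i^k-w_i^k\|^2+\xi_2\sum_{i=1}^n\|z^k-x_i^k\|^2+\xi_3\|B(z^k)-w_{n+1}^k\|^2\to0$$ for some scalars $\xi_1,\xi_2,\xi_3>0$, and $p^k:=(z^k,w_1^k,\dots,w_{n+1}^k)\to\hat p:=(\hat z,\hat w_1,\dots,\hat w_{n+1})$. Then $\hat p\in\mathcal{S}$.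
   Context: $\mathcal{S}=\{(z,w_1,\dots,w_{n+1})\in\mathbb{R}^{(n+2)d}: w_i\in A_i(z)\ \forall i=1,\dots,n,\ w_{n+1}=B(z),\ \sum_{i=1}^{n+1}w_i=0\}$. *)

theory Defs
  imports "HOL-Analysis.Analysis"
begin

definition monotone_op :: "('a::real_inner \<Rightarrow> 'a set) \<Rightarrow> bool" where
  "monotone_op A \<longleftrightarrow>
     (\<forall>x u y v. u \<in> A x \<longrightarrow> v \<in> A y \<longrightarrow> inner (u - v) (x - y) \<ge> 0)"

definition maximal_monotone :: "('a::real_inner \<Rightarrow> 'a set) \<Rightarrow> bool" where
  "maximal_monotone A \<longleftrightarrow> monotone_op A \<and>
     (\<forall>A'. monotone_op A' \<and> (\<forall>x. A x \<subseteq> A' x) \<longrightarrow> A' = A)"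

definition monotone_fun :: "('a::real_inner \<Rightarrow> 'a) \<Rightarrow> bool" where
  "monotone_fun B \<longleftrightarrow> (\<forall>x y. inner (B x - B y) (x - y) \<ge> 0)"

definition solution_set ::
  "nat \<Rightarrow> (nat \<Rightarrow> 'a::real_inner \<Rightarrow> 'a set) \<Rightarrow> ('a \<Rightarrow> 'a) \<Rightarrow> ('a \<times> (nat \<Rightarrow> 'a)) set" where
  "solution_set n A B = {(z, w). (\<forall>i\<in>{1..n}. w i \<in> A i z) \<and> w (n+1) = B z \<and>
                                   (\<Sum>i=1..n+1. w i) = 0}"

end

theory Submission
  imports Defs
begin

text \<open>Each of the three nonnegative residual terms is bounded by the null residual, so
  y_i^k - w_i^k, z^k - x_i^k and B(z^k) - w_(n+1)^k tend to 0. Hence (x_i^k, y_i^k) converges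
  to (zhat, what_i), which lies in the graph of A_i because the graph of a maximal monotone
  operator is sequentially closed; continuity of B gives what_(n+1) = B(zhat), and the linear
  constraint on the w_i passes to the limit.\<close>

lemma maximal_monotone_memI:
  fixes A :: "'a::real_inner \<Rightarrow> 'a set"
  assumes mm: "maximal_monotone A"
    and mono_rel: "\<And>b v. v \<in> A b \<Longrightarrow> inner (y - v) (x - b) \<ge> 0"
  shows "y \<in> A x"
proof -
  define A' where "A' = A(x := insert y (A x))"
  have mono: "monotone_op A" using mm unfolding maximal_monotone_def by blast
  have A'_cases: "u \<in> A a \<or> (a = x \<and> u = y)" if "u \<in> A' a" for a u
    using that unfolding A'_def by (auto split: if_splits)
  have swap: "inner (u - v) (a - b) = inner (v - u) (b - a)" for u v a b :: 'a
    by (simp add: inner_diff_left inner_diff_right inner_commute)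
  have "inner (u - v) (a - b) \<ge> 0" if "u \<in> A' a" "v \<in> A' b" for a u b v
    using A'_cases[OF that(1)] A'_cases[OF that(2)] mono mono_rel
    by (auto simp: monotone_op_def swap[of _ y])
  then have "monotone_op A'" unfolding monotone_op_def by blast
  moreover have "\<forall>a. A a \<subseteq> A' a" unfolding A'_def by auto
  ultimately have "A' = A" using mm unfolding maximal_monotone_def by blast
  then show ?thesis unfolding A'_def by (metis fun_upd_same insertI1)
qed

lemma maximal_monotone_graph_closed:
  fixes A :: "'a::real_inner \<Rightarrow> 'a set"
  assumes mm: "maximal_monotone A"
    and xs: "xs \<longlonglongrightarrow> x" and ys: "ys \<longlonglongrightarrow> y"
    and in_graph: "\<And>k. ys k \<in> A (xs k)"
  shows "y \<in> A x"
  using mm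
proof (rule maximal_monotone_memI)
  fix b v assume "v \<in> A b"
  then have "\<forall>k. inner (ys k - v) (xs k - b) \<ge> 0"
    using mm in_graph unfolding maximal_monotone_def monotone_op_def by blast
  moreover have "(\<lambda>k. inner (ys k - v) (xs k - b)) \<longlonglongrightarrow> inner (y - v) (x - b)"
    using xs ys by (intro tendsto_intros)
  ultimately show "inner (y - v) (x - b) \<ge> 0"
    by (intro LIMSEQ_le_const) auto
qed

lemma tendsto_zero_of_scaled_square_le:
  fixes f :: "nat \<Rightarrow> 'a::real_normed_vector"
  assumes "S \<longlonglongrightarrow> 0" "c > 0" "\<And>k. c * (norm (f k))\<^sup>2 \<le> S k"
  shows "f \<longlonglongrightarrow> 0"
proof (rule Lim_null_comparison)
  show "\<forall>\<^sub>F k in sequentially. norm (f k) \<le> sqrt (S k / c)"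
    using assms(2,3) by (intro always_eventually allI real_le_rsqrt) (simp add: field_simps)
  show "(\<lambda>k. sqrt (S k / c)) \<longlonglongrightarrow> 0"
    using tendsto_real_sqrt[OF tendsto_divide[OF assms(1) tendsto_const]] assms(2) by simp
qed

lemma weighted_residual_tendsto_zero:
  fixes a b :: "nat \<Rightarrow> 'i \<Rightarrow> 'a::real_normed_vector" and c :: "nat \<Rightarrow> 'a"
  assumes residual: "(\<lambda>k. \<xi>1 * (\<Sum>i\<in>I. (norm (a k i))\<^sup>2) + \<xi>2 * (\<Sum>i\<in>I. (norm (b k i))\<^sup>2)
                          + \<xi>3 * (norm (c k))\<^sup>2) \<longlonglongrightarrow> 0"
    and pos: "\<xi>1 > 0" "\<xi>2 > 0" "\<xi>3 > 0"
    and "finite I"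
  shows "\<And>i. i \<in> I \<Longrightarrow> (\<lambda>k. a k i) \<longlonglongrightarrow> 0" "\<And>i. i \<in> I \<Longrightarrow> (\<lambda>k. b k i) \<longlonglongrightarrow> 0"
    "c \<longlonglongrightarrow> 0"
proof -
  have term_le: "\<xi> * (norm (f k i))\<^sup>2 \<le> \<xi> * (\<Sum>i\<in>I. (norm (f k i))\<^sup>2)"
    if "\<xi> > 0" "i \<in> I" for \<xi> and f :: "nat \<Rightarrow> 'i \<Rightarrow> 'a" and i k
    using that \<open>finite I\<close> by (intro mult_left_mono member_le_sum) auto
  have nonneg: "0 \<le> \<xi>1 * (\<Sum>i\<in>I. (norm (a k i))\<^sup>2)" "0 \<le> \<xi>2 * (\<Sum>i\<in>I. (norm (b k i))\<^sup>2)"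
    "0 \<le> \<xi>3 * (norm (c k))\<^sup>2" for k
    using pos by (auto intro!: mult_nonneg_nonneg sum_nonneg)
  show "(\<lambda>k. a k i) \<longlonglongrightarrow> 0" if "i \<in> I" for i
    using term_le[OF pos(1) that, of a] nonneg
    by (intro tendsto_zero_of_scaled_square_le[OF residual pos(1)]) (smt (verit))
  show "(\<lambda>k. b k i) \<longlonglongrightarrow> 0" if "i \<in> I" for i
    using term_le[OF pos(2) that, of b] nonneg
    by (intro tendsto_zero_of_scaled_square_le[OF residual pos(2)]) (smt (verit))
  show "c \<longlonglongrightarrow> 0"
    using nonneg by (intro tendsto_zero_of_scaled_square_le[OF residual pos(3)]) (smt (verit))
qed

theorem lemma4:
  fixes n :: nat
    and A :: "nat \<Rightarrow> real ^ 'd \<Rightarrow> (real ^ 'd) set"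
    and B :: "real ^ 'd \<Rightarrow> real ^ 'd"
    and z :: "nat \<Rightarrow> real ^ 'd"
    and w x y :: "nat \<Rightarrow> nat \<Rightarrow> real ^ 'd"
    and \<xi>1 \<xi>2 \<xi>3 :: real
    and zhat :: "real ^ 'd" and what :: "nat \<Rightarrow> real ^ 'd"
  assumes maxmono: "\<forall>i\<in>{1..n}. maximal_monotone (A i)"
    and Bmono: "monotone_fun B"
    and Blip: "\<exists>L. L-lipschitz_on UNIV B"
    and incl: "\<forall>k. \<forall>i\<in>{1..n}. y k i \<in> A i (x k i)"
    and sum0: "\<forall>k. (\<Sum>i=1..n+1. w k i) = 0"
    and xi_pos: "\<xi>1 > 0" "\<xi>2 > 0" "\<xi>3 > 0"
    and resid: "(\<lambda>k. \<xi>1 * (\<Sum>i=1..n. (norm (y k i - w k i))\<^sup>2)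
                   + \<xi>2 * (\<Sum>i=1..n. (norm (z k - x k i))\<^sup>2)
                   + \<xi>3 * (norm (B (z k) - w k (n+1)))\<^sup>2) \<longlonglongrightarrow> 0"
    and zconv: "z \<longlonglongrightarrow> zhat"
    and wconv: "\<forall>i\<in>{1..n+1}. (\<lambda>k. w k i) \<longlonglongrightarrow> what i"
  shows "(zhat, what) \<in> solution_set n A B"
proof -
  note residual_to_zero = weighted_residual_tendsto_zero[OF resid xi_pos finite_atLeastAtMost]
  have "what i \<in> A i zhat" if i: "i \<in> {1..n}" for i
  proof (rule maximal_monotone_graph_closed)
    show "(\<lambda>k. x k i) \<longlonglongrightarrow> zhat"
      using Lim_transform2[OF zconv residual_to_zero(2)[OF i]] .
    show "(\<lambda>k. y k i) \<longlonglongrightarrow> what i"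
      using Lim_transform[OF _ residual_to_zero(1)[OF i]] wconv i by auto
  qed (use maxmono incl i in auto)
  moreover have "what (n+1) = B zhat"
  proof -
    obtain L where "L-lipschitz_on UNIV B" using Blip by blast
    then have "(\<lambda>k. B (z k)) \<longlonglongrightarrow> B zhat"
      by (intro continuous_on_tendsto_compose[OF lipschitz_on_continuous_on zconv]) auto
    from Lim_transform2[OF this residual_to_zero(3)]
    have "(\<lambda>k. w k (n+1)) \<longlonglongrightarrow> B zhat" .
    moreover have "(\<lambda>k. w k (n+1)) \<longlonglongrightarrow> what (n+1)" using wconv by simp
    ultimately show ?thesis using LIMSEQ_unique by blast
  qed
  moreover have "(\<lambda>k. \<Sum>i=1..n+1. w k i) \<longlonglongrightarrow> (\<Sum>i=1..n+1. what i)"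
    using wconv by (intro tendsto_sum) auto
  then have "(\<Sum>i=1..n+1. what i) = 0" using sum0 by (simp add: LIMSEQ_const_iff)
  ultimately show ?thesis unfolding solution_set_def by auto
qed

end
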